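(* Let $\zeta_*\in(0,1]$, $\gamma_*\in(0,1]$, and $\nu_*=(1-\zeta_* )\delta_0+\zeta_*\delta_{\gamma_*}$. Then \[ \inf_{\nu:\ \nu((0,\infty))<\frac12\zeta_*}\|F_\nu-F_{\nu_*}\|_\infty\ \ge\ 0.01\,\gamma_*^2\zeta_*, \] where the infimum is over probability distributions $\nu$ on $\mathbb{R}$.
   Context: $\delta_x$ denotes the point mass at $x$. For a probability distribution $\nu$ on $\mathbb{R}$, $F_\nu(t):=\mathbb{P}_{\mu\sim\nu,\,X\sim\mathcal{N}(\mu,1)}(X\le t)$, and $\|\cdot\|_\infty$ is the sup norm over $t\in\mathbb{R}$. *)

theory Defs
  imports "HOL-Probability.Probability"
begin

text \<open>CDF of the Gaussian location mixture: F_nu(t) = P(X <= t) where mu ~ nu and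
  X ~ N(mu,1), i.e. the nu-average of the N(mu,1) probability of (-infinity, t].\<close>
definition mixture_cdf :: "real measure \<Rightarrow> real \<Rightarrow> real" where
  "mixture_cdf \<nu> t =
     (\<integral>\<mu>. measure (density lborel (normal_density \<mu> 1)) {..t} \<partial>\<nu>)"

definition cdf_sup_dist :: "real measure \<Rightarrow> real measure \<Rightarrow> real" where
  "cdf_sup_dist \<nu> \<nu>' = (SUP t. \<bar>mixture_cdf \<nu> t - mixture_cdf \<nu>' t\<bar>)"

text \<open>The two-point distribution (1 - zeta) delta_0 + zeta delta_gamma.\<close>
definition two_point :: "real \<Rightarrow> real \<Rightarrow> real measure" where
  "two_point \<zeta> \<gamma> = measure_pmf (map_pmf (\<lambda>b. if b then \<gamma> else 0) (bernoulli_pmf \<zeta>))"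

end

theory Submission
  imports Defs
begin

(* Let h(m) = Phi(gamma + 1 - m) - Phi(gamma - 1 - m) be the N(m,1)-probability of the window
   (gamma - 1, gamma + 1], Phi the standard normal CDF.  As a function of m, h increases up to
   m = gamma and decreases afterwards, and h(gamma) - h(0) >= 0.04 gamma^2.  The window mass of the
   mixture is F_nu(gamma + 1) - F_nu(gamma - 1) = integral of h against nu; since nu puts mass
   p < zeta/2 on (0, oo), it is at most h(0) + (h(gamma) - h(0)) p, while for nu_* it equals
   h(0) + (h(gamma) - h(0)) zeta.  The window masses thus differ by at least 0.02 gamma^2 zeta, so
   F_nu and F_nu_* differ by at least 0.01 gamma^2 zeta at one of the endpoints gamma - 1, gamma + 1. *)

definition std_normal_cdf :: "real \<Rightarrow> real" where
  "std_normal_cdf = cdf std_normal_distribution"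

lemma measure_normal_density_atMost:
  assumes "0 < \<sigma>"
  shows "measure (density lborel (normal_density \<mu> \<sigma>)) {..t} = std_normal_cdf ((t - \<mu>) / \<sigma>)"
proof -
  have "emeasure (density lborel (normal_density \<mu> \<sigma>)) {..t}
      = (\<integral>\<^sup>+x. ennreal (normal_density \<mu> \<sigma> x) * indicator {..t} x \<partial>lborel)"
    by (simp add: emeasure_density)
  also have "\<dots> = \<sigma> * (\<integral>\<^sup>+x. ennreal (normal_density \<mu> \<sigma> (\<mu> + \<sigma> * x))
      * indicator {..t} (\<mu> + \<sigma> * x) \<partial>lborel)"
    using assms by (subst nn_integral_real_affine[where c=\<sigma> and t=\<mu>]) auto
  also have "\<dots> = (\<integral>\<^sup>+x. ennreal (std_normal_density x) * indicator {..(t - \<mu>) / \<sigma>} x \<partial>lborel)"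
    using assms
    by (subst nn_integral_cmult[symmetric])
       (auto intro!: nn_integral_cong simp: normal_density_def indicator_def ennreal_mult'[symmetric]
         field_simps real_sqrt_mult power2_eq_square)
  also have "\<dots> = emeasure std_normal_distribution {..(t - \<mu>) / \<sigma>}"
    by (simp add: emeasure_density)
  finally show ?thesis
    unfolding std_normal_cdf_def cdf_def measure_def by simp
qed

lemma std_normal_cdf_nonneg: "0 \<le> std_normal_cdf x"
  and std_normal_cdf_le_1: "std_normal_cdf x \<le> 1"
proof -
  interpret real_distribution std_normal_distribution
    by (rule real_dist_normal_dist)
  show "0 \<le> std_normal_cdf x" "std_normal_cdf x \<le> 1"
    by (simp_all add: std_normal_cdf_def cdf_nonneg cdf_bounded_prob)
qed

lemma continuous_on_std_normal_density: "continuous_on S std_normal_density"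
  unfolding std_normal_density_def by (intro continuous_intros) simp

lemma std_normal_cdf_diff_eq_integral:
  assumes "x \<le> y"
  shows "std_normal_cdf y - std_normal_cdf x = integral {x..y} std_normal_density"
proof (cases "x = y")
  case False
  with assms have "x < y" by simp
  have "((\<lambda>z. indicator {x<..y} z * std_normal_density z) has_integral integral {x..y} std_normal_density) UNIV"
  proof -
    have "(std_normal_density has_integral integral {x..y} std_normal_density) {x..y}"
      using integrable_continuous_real[OF continuous_on_std_normal_density] by blast
    then have "(std_normal_density has_integral integral {x..y} std_normal_density) {x<..y}"
      by (subst has_integral_spike_set_eq[where T="{x..y}"])
         (auto intro: negligible_subset[of "{x}"])
    moreover have "(\<lambda>z. indicator {x<..y} z * std_normal_density z)
        = (\<lambda>z. if z \<in> {x<..y} then std_normal_density z else 0)"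
      by (auto simp: indicator_def)
    ultimately show ?thesis
      by (simp only: has_integral_restrict_UNIV)
  qed
  then have "(\<integral>\<^sup>+z. ennreal (indicator {x<..y} z * std_normal_density z) \<partial>lborel)
      = ennreal (integral {x..y} std_normal_density)"
    by (intro nn_integral_has_integral_lborel) auto
  moreover have "emeasure std_normal_distribution {x<..y}
      = (\<integral>\<^sup>+z. ennreal (indicator {x<..y} z * std_normal_density z) \<partial>lborel)"
    by (auto simp: emeasure_density indicator_def intro!: nn_integral_cong)
  ultimately have "emeasure std_normal_distribution {x<..y} = ennreal (integral {x..y} std_normal_density)"
    by simp
  moreover have "0 \<le> integral {x..y} std_normal_density"
    using assms by (intro integral_nonneg integrable_continuous_real continuous_on_std_normal_density) auto
  ultimately have "measure std_normal_distribution {x<..y} = integral {x..y} std_normal_density"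
    by (simp add: measure_def)
  then show ?thesis
    using real_distribution.finite_borel_measure_M[OF real_dist_normal_dist] \<open>x < y\<close>
    by (simp add: std_normal_cdf_def finite_borel_measure.cdf_diff_eq)
qed simp

lemma has_real_derivative_std_normal_cdf:
  "(std_normal_cdf has_real_derivative std_normal_density x) (at x)"
proof -
  let ?F = "\<lambda>u. std_normal_cdf (x - 1) + integral {x - 1..u} std_normal_density"
  have "(?F has_real_derivative std_normal_density x) (at x within {x - 1..x + 1})"
    by (rule DERIV_cong[OF DERIV_add[OF DERIV_const
          integral_has_real_derivative[OF continuous_on_std_normal_density]]]) auto
  then have "(?F has_real_derivative std_normal_density x) (at x)"
    by (subst (asm) at_within_interior) auto
  then show ?thesis
    by (rule has_field_derivative_transform_within_open[where S="{x - 1<..<x + 1}"])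
       (auto simp: std_normal_cdf_diff_eq_integral[of "x - 1", symmetric])
qed

lemma continuous_std_normal_cdf: "continuous_on S std_normal_cdf"
  using has_real_derivative_std_normal_cdf
  by (meson DERIV_isCont continuous_at_imp_continuous_on)

lemma borel_measurable_std_normal_cdf[measurable]: "std_normal_cdf \<in> borel_measurable borel"
  by (rule borel_measurable_continuous_onI[OF continuous_std_normal_cdf])

lemma std_normal_density_le_of_sq_le: "x\<^sup>2 \<le> y\<^sup>2 \<Longrightarrow> std_normal_density y \<le> std_normal_density x"
  by (simp add: std_normal_density_def divide_right_mono)

lemma std_normal_density_diff_ge:
  assumes "0 \<le> v" "v \<le> 1"
  shows "0.08 * v \<le> std_normal_density (v - 1) - std_normal_density (v + 1)"
proof -
  \<comment> \<open>\<open>\<phi>(v - 1) - \<phi>(v + 1) = \<phi>(v - 1) (1 - e\<^sup>-\<^sup>2\<^sup>v)\<close> with \<open>\<phi>(v - 1) \<ge> 1/6\<close> and \<open>1 - e\<^sup>-\<^sup>2\<^sup>v \<ge> 2v/3\<close>\<close>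
  define E where "E = exp (- (v - 1)\<^sup>2 / 2)"
  have "(1 - v) * (1 - v) \<le> 1 * 1"
    using assms by (intro mult_mono) auto
  then have "exp (- 1 / 2) \<le> E"
    unfolding E_def by (simp add: power2_eq_square algebra_simps)
  moreover have "1 / 2 \<le> exp (- 1 / 2 :: real)"
    using exp_ge_add_one_self[of "- 1 / 2 :: real"] by simp
  ultimately have E: "1 / 2 \<le> E" by simp
  have "exp (- (2 * v)) \<le> 1 / (1 + 2 * v)"
    using exp_ge_add_one_self[of "2 * v"] assms by (simp add: exp_minus divide_simps)
  also have "\<dots> \<le> 1 - 2 * v / 3"
    using assms by (simp add: divide_simps) (simp add: algebra_simps power2_eq_square mult_left_le)
  finally have exp_gap: "2 * v / 3 \<le> 1 - exp (- (2 * v))" by simp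
  have "sqrt (2 * pi) \<le> sqrt 9"
    using pi_less_4 by (intro real_sqrt_le_mono) simp
  then have C: "1 / 3 \<le> 1 / sqrt (2 * pi)" by (simp add: divide_simps)
  have "exp (- (v + 1)\<^sup>2 / 2) = E * exp (- (2 * v))"
    unfolding E_def mult_exp_exp by (simp add: power2_eq_square field_simps)
  then have "std_normal_density (v - 1) - std_normal_density (v + 1)
      = 1 / sqrt (2 * pi) * (E * (1 - exp (- (2 * v))))"
    by (simp add: std_normal_density_def E_def algebra_simps)
  also have "\<dots> \<ge> 1 / 3 * (1 / 2 * (2 * v / 3))"
    using C E exp_gap assms by (intro mult_mono) auto
  finally have "v / 9 \<le> std_normal_density (v - 1) - std_normal_density (v + 1)" by simp
  then show ?thesis using assms by (simp add: power2_eq_square)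
qed

definition normal_window_prob :: "real \<Rightarrow> real \<Rightarrow> real" where
  "normal_window_prob c m = std_normal_cdf (c + 1 - m) - std_normal_cdf (c - 1 - m)"

lemma has_real_derivative_normal_window_prob:
  "(normal_window_prob c has_real_derivative
      std_normal_density (c - 1 - m) - std_normal_density (c + 1 - m)) (at m)"
proof -
  have "((\<lambda>m. std_normal_cdf (a - m)) has_real_derivative std_normal_density (a - m) * - 1) (at m)" for a
    by (rule DERIV_chain2[OF has_real_derivative_std_normal_cdf]) (auto intro!: derivative_eq_intros)
  from DERIV_diff[OF this this] show ?thesis
    unfolding normal_window_prob_def[abs_def] by simp
qed

lemma normal_window_prob_mono:
  assumes "m \<le> m'" "m' \<le> c"
  shows "normal_window_prob c m \<le> normal_window_prob c m'"
proof (rule DERIV_nonneg_imp_nondecreasing[OF assms(1)])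
  fix x assume "m \<le> x" "x \<le> m'"
  then have "(c - 1 - x)\<^sup>2 \<le> (c + 1 - x)\<^sup>2"
    using assms by (simp add: power2_eq_square algebra_simps)
  then show "\<exists>y. DERIV (normal_window_prob c) x :> y \<and> y \<ge> 0"
    using has_real_derivative_normal_window_prob std_normal_density_le_of_sq_le by fastforce
qed

lemma normal_window_prob_antimono:
  assumes "c \<le> m" "m \<le> m'"
  shows "normal_window_prob c m' \<le> normal_window_prob c m"
proof (rule DERIV_nonpos_imp_nonincreasing[OF assms(2)])
  fix x assume "m \<le> x" "x \<le> m'"
  then have "(c + 1 - x)\<^sup>2 \<le> (c - 1 - x)\<^sup>2"
    using assms by (simp add: power2_eq_square algebra_simps)
  then show "\<exists>y. DERIV (normal_window_prob c) x :> y \<and> y \<le> 0"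
    using has_real_derivative_normal_window_prob std_normal_density_le_of_sq_le by fastforce
qed

lemma normal_window_prob_le_center: "normal_window_prob c m \<le> normal_window_prob c c"
  using normal_window_prob_mono[of m c c] normal_window_prob_antimono[of c c m]
  by (cases "m \<le> c") auto

lemma normal_window_prob_center_gap:
  assumes "0 \<le> c" "c \<le> 1"
  shows "normal_window_prob c 0 + 0.04 * c\<^sup>2 \<le> normal_window_prob c c"
proof -
  define k where "k u = normal_window_prob c u + 0.04 * (c - u)\<^sup>2" for u
  have "k 0 \<le> k c"
  proof (rule DERIV_nonneg_imp_nondecreasing[OF assms(1)])
    fix x assume "0 \<le> x" "x \<le> c"
    have "DERIV k x :> std_normal_density (c - 1 - x) - std_normal_density (c + 1 - x)
        + 0.04 * (2 * (c - x) * - 1)"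
      unfolding k_def[abs_def] using has_real_derivative_normal_window_prob[of c x]
      by (auto intro!: derivative_eq_intros)
    moreover have "0.08 * (c - x) \<le> std_normal_density (c - 1 - x) - std_normal_density (c + 1 - x)"
      using std_normal_density_diff_ge[of "c - x"] \<open>0 \<le> x\<close> \<open>x \<le> c\<close> assms
      by (simp add: algebra_simps)
    ultimately show "\<exists>y. DERIV k x :> y \<and> y \<ge> 0"
      by (intro exI conjI) (assumption, linarith)
  qed
  then show ?thesis by (simp add: k_def)
qed

lemma mixture_cdf_eq_integral: "mixture_cdf \<nu> t = (\<integral>\<mu>. std_normal_cdf (t - \<mu>) \<partial>\<nu>)"
  unfolding mixture_cdf_def by (simp add: measure_normal_density_atMost[of 1])

lemma mixture_cdf_two_point:
  assumes "0 \<le> \<zeta>" "\<zeta> \<le> 1"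
  shows "mixture_cdf (two_point \<zeta> \<gamma>) t = (1 - \<zeta>) * std_normal_cdf t + \<zeta> * std_normal_cdf (t - \<gamma>)"
  using assms unfolding mixture_cdf_eq_integral two_point_def by simp

lemma mixture_cdf_nonneg: "0 \<le> mixture_cdf \<nu> t"
  unfolding mixture_cdf_eq_integral by (simp add: std_normal_cdf_nonneg)

lemma mixture_cdf_le_1:
  assumes "prob_space \<nu>"
  shows "mixture_cdf \<nu> t \<le> 1"
proof -
  \<comment> \<open>No measurability is needed: a non-integrable function has Bochner integral 0.\<close>
  have "(\<integral>\<mu>. std_normal_cdf (t - \<mu>) \<partial>\<nu>) \<le> (\<integral>\<mu>. 1 \<partial>\<nu>)"
    using assms by (intro integral_mono' finite_measure.integrable_const prob_space.finite_measure)
      (auto simp: std_normal_cdf_le_1)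
  then show ?thesis
    using assms by (simp add: mixture_cdf_eq_integral prob_space.prob_space)
qed

context real_distribution
begin

lemma mixture_cdf_window_le:
  assumes "0 \<le> c"
  shows "mixture_cdf M (c + 1) - mixture_cdf M (c - 1)
    \<le> normal_window_prob c 0 + (normal_window_prob c c - normal_window_prob c 0) * prob {0<..}"
proof -
  let ?h = "normal_window_prob c" and ?bound = "\<lambda>\<mu>. normal_window_prob c 0
    + (normal_window_prob c c - normal_window_prob c 0) * indicator {0<..} \<mu>"
  have integrable_shift: "integrable M (\<lambda>\<mu>. std_normal_cdf (t - \<mu>))" for t
    by (rule integrable_const_bound[where B=1])
       (auto simp: std_normal_cdf_nonneg std_normal_cdf_le_1)
  have integrable_step: "integrable M (\<lambda>\<mu>. (?h c - ?h 0) * indicator {0<..} \<mu>)"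
    by (intro integrable_mult_right integrable_real_indicator) (auto simp: less_top[symmetric])
  then have integrable_bound: "integrable M ?bound"
    by (intro Bochner_Integration.integrable_add) auto
  have "mixture_cdf M (c + 1) - mixture_cdf M (c - 1) = (\<integral>\<mu>. ?h \<mu> \<partial>M)"
    unfolding mixture_cdf_eq_integral normal_window_prob_def
    by (rule Bochner_Integration.integral_diff[symmetric, OF integrable_shift integrable_shift])
  also have "\<dots> \<le> (\<integral>\<mu>. ?bound \<mu> \<partial>M)"
  proof (rule integral_mono[OF _ integrable_bound])
    show "integrable M ?h"
      unfolding normal_window_prob_def by (intro Bochner_Integration.integrable_diff integrable_shift)
    show "?h \<mu> \<le> ?bound \<mu>" for \<mu>
      using normal_window_prob_mono[of \<mu> 0 c] normal_window_prob_le_center[of c \<mu>] \<open>0 \<le> c\<close>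
      by (cases "0 < \<mu>") auto
  qed
  also have "\<dots> = ?h 0 + (?h c - ?h 0) * prob {0<..}"
    using integrable_step
    by (subst Bochner_Integration.integral_add) (auto simp: prob_space[unfolded space_eq_univ])
  finally show ?thesis .
qed

lemma mixture_cdf_window_deficit:
  assumes "0 < \<zeta>" "\<zeta> \<le> 1" "0 \<le> \<gamma>" "\<gamma> \<le> 1" and small: "prob {0<..} < \<zeta> / 2"
  shows "0.02 * \<gamma>\<^sup>2 * \<zeta> \<le> (mixture_cdf (two_point \<zeta> \<gamma>) (\<gamma> + 1) - mixture_cdf (two_point \<zeta> \<gamma>) (\<gamma> - 1))
    - (mixture_cdf M (\<gamma> + 1) - mixture_cdf M (\<gamma> - 1))"
proof -
  define h\<^sub>0 h\<^sub>1 where "h\<^sub>0 = normal_window_prob \<gamma> 0" and "h\<^sub>1 = normal_window_prob \<gamma> \<gamma>"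
  have "0.04 * \<gamma>\<^sup>2 \<le> h\<^sub>1 - h\<^sub>0"
    using normal_window_prob_center_gap[of \<gamma>] assms by (simp add: h\<^sub>0_def h\<^sub>1_def)
  then have "0.04 * \<gamma>\<^sup>2 * (\<zeta> / 2) \<le> (h\<^sub>1 - h\<^sub>0) * (\<zeta> - prob {0<..})"
    using small assms normal_window_prob_le_center[of \<gamma> 0]
    by (intro mult_mono) (auto simp: h\<^sub>0_def h\<^sub>1_def)
  moreover have "mixture_cdf M (\<gamma> + 1) - mixture_cdf M (\<gamma> - 1) \<le> h\<^sub>0 + (h\<^sub>1 - h\<^sub>0) * prob {0<..}"
    using mixture_cdf_window_le assms by (simp add: h\<^sub>0_def h\<^sub>1_def)
  moreover have "mixture_cdf (two_point \<zeta> \<gamma>) (\<gamma> + 1) - mixture_cdf (two_point \<zeta> \<gamma>) (\<gamma> - 1)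
      = h\<^sub>0 + (h\<^sub>1 - h\<^sub>0) * \<zeta>"
    using assms by (simp add: mixture_cdf_two_point h\<^sub>0_def h\<^sub>1_def normal_window_prob_def algebra_simps)
  ultimately show ?thesis
    by (simp add: algebra_simps)
qed

end

lemma abs_mixture_cdf_diff_le_cdf_sup_dist:
  assumes "prob_space \<nu>" "prob_space \<nu>'"
  shows "\<bar>mixture_cdf \<nu> t - mixture_cdf \<nu>' t\<bar> \<le> cdf_sup_dist \<nu> \<nu>'"
proof -
  have "\<bar>mixture_cdf \<nu> s - mixture_cdf \<nu>' s\<bar> \<le> 1" for s
    using mixture_cdf_nonneg[of \<nu> s] mixture_cdf_le_1[OF assms(1), of s]
      mixture_cdf_nonneg[of \<nu>' s] mixture_cdf_le_1[OF assms(2), of s]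
    by linarith
  then show ?thesis
    unfolding cdf_sup_dist_def by (intro cSUP_upper bdd_aboveI2) auto
qed

theorem lemma5:
  fixes \<zeta> \<gamma> :: real
  assumes "0 < \<zeta>" "\<zeta> \<le> 1" "0 < \<gamma>" "\<gamma> \<le> 1"
  shows "\<forall>\<nu>::real measure. prob_space \<nu> \<and> sets \<nu> = sets borel \<and>
           measure \<nu> {0<..} < \<zeta> / 2 \<longrightarrow>
           cdf_sup_dist \<nu> (two_point \<zeta> \<gamma>) \<ge> 0.01 * \<gamma>^2 * \<zeta>"
proof (intro allI impI, elim conjE)
  fix \<nu> :: "real measure"
  assume \<nu>: "prob_space \<nu>" "sets \<nu> = sets borel" and small: "measure \<nu> {0<..} < \<zeta> / 2"
  interpret \<nu>: real_distribution \<nu>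
    using \<nu> by (simp add: real_distribution_def real_distribution_axioms_def)
  let ?F = "mixture_cdf \<nu>" and ?G = "mixture_cdf (two_point \<zeta> \<gamma>)"
  have "2 * (0.01 * \<gamma>\<^sup>2 * \<zeta>) \<le> (?G (\<gamma> + 1) - ?G (\<gamma> - 1)) - (?F (\<gamma> + 1) - ?F (\<gamma> - 1))"
    using \<nu>.mixture_cdf_window_deficit[of \<zeta> \<gamma>] small assms by linarith
  also have "\<dots> \<le> \<bar>?F (\<gamma> + 1) - ?G (\<gamma> + 1)\<bar> + \<bar>?F (\<gamma> - 1) - ?G (\<gamma> - 1)\<bar>"
    by (simp add: abs_if)
  finally obtain t where "0.01 * \<gamma>\<^sup>2 * \<zeta> \<le> \<bar>?F t - ?G t\<bar>"
    by (smt (verit))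
  also have "\<dots> \<le> cdf_sup_dist \<nu> (two_point \<zeta> \<gamma>)"
    using \<nu>(1) by (intro abs_mixture_cdf_diff_le_cdf_sup_dist) (simp_all add: two_point_def prob_space_measure_pmf)
  finally show "0.01 * \<gamma>^2 * \<zeta> \<le> cdf_sup_dist \<nu> (two_point \<zeta> \<gamma>)" .
qed

end
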